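(* Let $S$ be an $X$-generated $F$-inverse monoid with greatest group image $G$, and let $w\in\mathbb{I}\mathfrak{m}_X$. Then a term $u\in\mathbb{I}\mathfrak{m}_X$ labels a journey in the $F$-Schützenberger graph $F\Gamma(w)$ from $1$ to $w_G$ if and only if $u_S\ge w_S$ in the natural partial order of $S$.
   Context: An $F$-inverse monoid is an inverse monoid in which every $\sigma$-class has a greatest element in the natural partial order, viewed as an algebra in signature $(\cdot,1,{}^{-1},{}^{\mathfrak m})$ with $s^{\mathfrak m}$ the greatest element of the $\sigma$-class of $s$; it is $X$-generated via $\iota:X\to S$ if $\iota(X)$ generates it in this signature, and then $G=S/\sigma$ is $X$-generated via $\sigma^\sharp\circ\iota$. $\mathbb{I}\mathfrak{m}_X$ is the set of formal terms $u_0v_1^{\mathfrak m}u_1\cdots v_n^{\mathfrak m}u_n$ ($u_i,v_i\in(X\cup X^{-1})^*$), and $w_S$, $w_G$ denote values. $\Gamma_X$ is the Cayley graph of $G$ (vertices $G$, edge labeled $x$ from $g$ to $gx_G$ for $x\in X\cup X^{-1}$, with the obvious involution on edges); subgraphs are closed under endpoints and inverses. The journey labeled $w=u_0v_1^{\mathfrak m}u_1\cdots v_n^{\mathfrak m}u_n$ starting at $g$ is $g\overline w=(g\overline{u_0}, g(u_0v_1)_G\overline{u_1},\dots,g(u_0v_1\cdots u_{n-1}v_n)_G\overline{u_n})$ where $h\overline u$ is the path from $h$ labeled by the word $u$; $\langle g\overline w\rangle$ is the union of the subgraphs spanned by these paths; $w$ labels a journey in $\Delta$ from $g$ to $h$ if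 $gw_G=h$ and $\langle g\overline w\rangle\subseteq\Delta$; $\overline w=1\overline w$. A subgraph $\Delta$ is $c_S$-closed if for all $u,v\in\mathbb{I}\mathfrak{m}_X$ with $u_S=v_S$ and all $g,h\in V(\Delta)$, $u$ labels a journey in $\Delta$ from $g$ to $h$ iff $v$ does; $\Delta^{c_S}$ is the intersection of all $c_S$-closed subgraphs containing $\Delta$. The $F$-Schützenberger graph of $w$ is $F\Gamma(w)=\langle\overline w\rangle^{c_S}$. *)

theory Defs
  imports Main
begin

text \<open>The carrier of the monoid is the whole type 's.\<close>
record 's FIM =
  smul :: "'s \<Rightarrow> 's \<Rightarrow> 's"
  sone :: 's
  sinv :: "'s \<Rightarrow> 's"
  smax :: "'s \<Rightarrow> 's"

definition inverse_monoid :: "('s, 'z) FIM_scheme \<Rightarrow> bool" where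
  "inverse_monoid S \<longleftrightarrow>
     (\<forall>a b c. smul S (smul S a b) c = smul S a (smul S b c)) \<and>
     (\<forall>a. smul S (sone S) a = a \<and> smul S a (sone S) = a) \<and>
     (\<forall>a. smul S (smul S a (sinv S a)) a = a \<and> smul S (smul S (sinv S a) a) (sinv S a) = sinv S a) \<and>
     (\<forall>a b. smul S (smul S a b) a = a \<and> smul S (smul S b a) b = b \<longrightarrow> b = sinv S a)"

definition nat_le :: "('s, 'z) FIM_scheme \<Rightarrow> 's \<Rightarrow> 's \<Rightarrow> bool" where
  "nat_le S a b \<longleftrightarrow> (\<exists>e. smul S e e = e \<and> a = smul S e b)"

definition sigma :: "('s, 'z) FIM_scheme \<Rightarrow> 's \<Rightarrow> 's \<Rightarrow> bool" where
  "sigma S a b \<longleftrightarrow> (\<exists>c. nat_le S c a \<and> nat_le S c b)"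

definition F_inverse_monoid :: "('s, 'z) FIM_scheme \<Rightarrow> bool" where
  "F_inverse_monoid S \<longleftrightarrow> inverse_monoid S \<and>
     (\<forall>s. sigma S (smax S s) s \<and> (\<forall>t. sigma S t s \<longrightarrow> nat_le S t (smax S s)))"

inductive_set gen_by :: "('s, 'z) FIM_scheme \<Rightarrow> 's set \<Rightarrow> 's set" for S A where
  base: "a \<in> A \<Longrightarrow> a \<in> gen_by S A"
| one: "sone S \<in> gen_by S A"
| mul: "a \<in> gen_by S A \<Longrightarrow> b \<in> gen_by S A \<Longrightarrow> smul S a b \<in> gen_by S A"
| inv: "a \<in> gen_by S A \<Longrightarrow> sinv S a \<in> gen_by S A"
| max: "a \<in> gen_by S A \<Longrightarrow> smax S a \<in> gen_by S A"

definition X_generated :: "('s, 'z) FIM_scheme \<Rightarrow> 'x set \<Rightarrow> ('x \<Rightarrow> 's) \<Rightarrow> bool" where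
  "X_generated S X \<iota> \<longleftrightarrow> gen_by S (\<iota> ` X) = UNIV"

text \<open>A letter (x, False) stands for x, (x, True) for the formal inverse x^{-1}.\<close>
type_synonym 'x letter = "'x \<times> bool"
type_synonym 'x word = "'x letter list"
text \<open>A term u0 v1^m u1 ... vn^m un is represented as (u0, [(v1,u1),...,(vn,un)]).\<close>
type_synonym 'x fterm = "'x word \<times> ('x word \<times> 'x word) list"

definition word_over :: "'x set \<Rightarrow> 'x word \<Rightarrow> bool" where
  "word_over X u \<longleftrightarrow> fst ` set u \<subseteq> X"

definition term_over :: "'x set \<Rightarrow> 'x fterm \<Rightarrow> bool" where
  "term_over X w \<longleftrightarrow> word_over X (fst w) \<and>
     (\<forall>p \<in> set (snd w). word_over X (fst p) \<and> word_over X (snd p))"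

fun flip :: "'x letter \<Rightarrow> 'x letter" where
  "flip (x, b) = (x, \<not> b)"

fun lval :: "('s, 'z) FIM_scheme \<Rightarrow> ('x \<Rightarrow> 's) \<Rightarrow> 'x letter \<Rightarrow> 's" where
  "lval S \<iota> (x, b) = (if b then sinv S (\<iota> x) else \<iota> x)"

definition wval :: "('s, 'z) FIM_scheme \<Rightarrow> ('x \<Rightarrow> 's) \<Rightarrow> 'x word \<Rightarrow> 's" where
  "wval S \<iota> u = foldr (\<lambda>a r. smul S (lval S \<iota> a) r) u (sone S)"

definition tval :: "('s, 'z) FIM_scheme \<Rightarrow> ('x \<Rightarrow> 's) \<Rightarrow> 'x fterm \<Rightarrow> 's" where
  "tval S \<iota> w = smul S (wval S \<iota> (fst w))
     (foldr (\<lambda>p r. smul S (smul S (smax S (wval S \<iota> (fst p))) (wval S \<iota> (snd p))) r) (snd w) (sone S))"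

definition cls :: "('s, 'z) FIM_scheme \<Rightarrow> 's \<Rightarrow> 's set" where
  "cls S s = {t. sigma S s t}"

definition grp :: "('s, 'z) FIM_scheme \<Rightarrow> 's set set" where
  "grp S = range (cls S)"

definition gmul :: "('s, 'z) FIM_scheme \<Rightarrow> 's set \<Rightarrow> 's set \<Rightarrow> 's set" where
  "gmul S g h = cls S (smul S (SOME a. g = cls S a) (SOME b. h = cls S b))"

definition gw :: "('s, 'z) FIM_scheme \<Rightarrow> ('x \<Rightarrow> 's) \<Rightarrow> 'x word \<Rightarrow> 's set" where
  "gw S \<iota> u = cls S (wval S \<iota> u)"

type_synonym ('s, 'x) edge = "'s set \<times> 'x letter \<times> 's set"
type_synonym ('s, 'x) graph = "'s set set \<times> ('s, 'x) edge set"

definition cayley_edges :: "('s, 'z) FIM_scheme \<Rightarrow> 'x set \<Rightarrow> ('x \<Rightarrow> 's) \<Rightarrow> ('s, 'x) edge set" where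
  "cayley_edges S X \<iota> = {(g, a, gmul S g (cls S (lval S \<iota> a))) | g a. g \<in> grp S \<and> fst a \<in> X}"

definition gsub :: "('s, 'x) graph \<Rightarrow> ('s, 'x) graph \<Rightarrow> bool" where
  "gsub D1 D2 \<longleftrightarrow> fst D1 \<subseteq> fst D2 \<and> snd D1 \<subseteq> snd D2"

definition gunion :: "('s, 'x) graph \<Rightarrow> ('s, 'x) graph \<Rightarrow> ('s, 'x) graph" where
  "gunion D1 D2 = (fst D1 \<union> fst D2, snd D1 \<union> snd D2)"

definition is_subgraph :: "('s, 'z) FIM_scheme \<Rightarrow> 'x set \<Rightarrow> ('x \<Rightarrow> 's) \<Rightarrow> ('s, 'x) graph \<Rightarrow> bool" where
  "is_subgraph S X \<iota> D \<longleftrightarrow> fst D \<subseteq> grp S \<and> snd D \<subseteq> cayley_edges S X \<iota> \<and>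
     (\<forall>(g, a, h) \<in> snd D. g \<in> fst D \<and> h \<in> fst D \<and> (h, flip a, g) \<in> snd D)"

definition path_span :: "('s, 'z) FIM_scheme \<Rightarrow> ('x \<Rightarrow> 's) \<Rightarrow> 's set \<Rightarrow> 'x word \<Rightarrow> ('s, 'x) graph" where
  "path_span S \<iota> g u =
     ({gmul S g (gw S \<iota> p) | p. \<exists>q. p @ q = u},
      {(gmul S g (gw S \<iota> p), a, gmul S g (gw S \<iota> (p @ [a]))) | p a. \<exists>q. p @ a # q = u} \<union>
      {(gmul S g (gw S \<iota> (p @ [a])), flip a, gmul S g (gw S \<iota> p)) | p a. \<exists>q. p @ a # q = u})"

fun journey_rest :: "('s, 'z) FIM_scheme \<Rightarrow> ('x \<Rightarrow> 's) \<Rightarrow> 's set \<Rightarrow> ('x word \<times> 'x word) list \<Rightarrow> ('s, 'x) graph" where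
  "journey_rest S \<iota> h [] = ({}, {})"
| "journey_rest S \<iota> h ((v, u) # ps) =
     (let h' = gmul S h (gw S \<iota> v)
      in gunion (path_span S \<iota> h' u) (journey_rest S \<iota> (gmul S h' (gw S \<iota> u)) ps))"

definition journey_span :: "('s, 'z) FIM_scheme \<Rightarrow> ('x \<Rightarrow> 's) \<Rightarrow> 's set \<Rightarrow> 'x fterm \<Rightarrow> ('s, 'x) graph" where
  "journey_span S \<iota> g w =
     gunion (path_span S \<iota> g (fst w)) (journey_rest S \<iota> (gmul S g (gw S \<iota> (fst w))) (snd w))"

definition labels_journey :: "('s, 'z) FIM_scheme \<Rightarrow> ('x \<Rightarrow> 's) \<Rightarrow> ('s, 'x) graph \<Rightarrow> 's set \<Rightarrow> 's set \<Rightarrow> 'x fterm \<Rightarrow> bool" where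
  "labels_journey S \<iota> D g h w \<longleftrightarrow>
     gmul S g (cls S (tval S \<iota> w)) = h \<and> gsub (journey_span S \<iota> g w) D"

definition cS_closed :: "('s, 'z) FIM_scheme \<Rightarrow> 'x set \<Rightarrow> ('x \<Rightarrow> 's) \<Rightarrow> ('s, 'x) graph \<Rightarrow> bool" where
  "cS_closed S X \<iota> D \<longleftrightarrow> is_subgraph S X \<iota> D \<and>
     (\<forall>u v. term_over X u \<longrightarrow> term_over X v \<longrightarrow> tval S \<iota> u = tval S \<iota> v \<longrightarrow>
        (\<forall>g \<in> fst D. \<forall>h \<in> fst D. labels_journey S \<iota> D g h u \<longleftrightarrow> labels_journey S \<iota> D g h v))"

definition cS_closure :: "('s, 'z) FIM_scheme \<Rightarrow> 'x set \<Rightarrow> ('x \<Rightarrow> 's) \<Rightarrow> ('s, 'x) graph \<Rightarrow> ('s, 'x) graph" where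
  "cS_closure S X \<iota> D =
     (\<Inter> {fst E | E. cS_closed S X \<iota> E \<and> gsub D E}, \<Inter> {snd E | E. cS_closed S X \<iota> E \<and> gsub D E})"

definition FSchutz :: "('s, 'z) FIM_scheme \<Rightarrow> 'x set \<Rightarrow> ('x \<Rightarrow> 's) \<Rightarrow> 'x fterm \<Rightarrow> ('s, 'x) graph" where
  "FSchutz S X \<iota> w = cS_closure S X \<iota> (journey_span S \<iota> (cls S (sone S)) w)"

end

theory Submission
  imports Defs
begin

text \<open>For an idempotent \<open>e\<close>, distinct elements \<open>y\<close> with \<open>y y\<^sup>-\<^sup>1 = e\<close> (the \<open>\<R>\<close>-class of \<open>e\<close>) lie in
  distinct \<open>\<sigma>\<close>-classes, since two \<open>\<sigma>\<close>-related elements with the same range idempotent are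
  restrictions of the same maximal element. Hence the image of the \<open>\<R>\<close>-class of \<open>e = w\<^sub>S w\<^sub>S\<^sup>-\<^sup>1\<close> in
  \<open>\<Gamma>\<^sub>X\<close> is a subgraph in which a term \<open>u\<close> labels a journey starting at the vertex of \<open>y\<close> exactly
  when \<open>y u\<^sub>S\<close> stays in the \<open>\<R>\<close>-class. This subgraph is therefore \<open>c\<^sub>S\<close>-closed and contains
  \<open>\<langle>w\<rangle>\<close>, so it contains \<open>F\<Gamma>(w)\<close>: a journey labelled \<open>u\<close> from \<open>1\<close> to \<open>w\<^sub>G\<close> in \<open>F\<Gamma>(w)\<close> gives
  \<open>e u\<^sub>S = w\<^sub>S\<close>, i.e. \<open>w\<^sub>S \<le> u\<^sub>S\<close>. Conversely, if \<open>w\<^sub>S \<le> u\<^sub>S\<close> then \<open>u u\<^sup>-\<^sup>1 w\<close> has the same value as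
  \<open>w\<close>; so in every \<open>c\<^sub>S\<close>-closed subgraph containing \<open>\<langle>w\<rangle>\<close> it labels a journey from \<open>1\<close> to \<open>w\<^sub>G\<close>,
  and that journey contains the journey labelled \<open>u\<close>.\<close>

section \<open>Inverse monoids\<close>

locale inv_monoid =
  fixes S :: "('s, 'z) FIM_scheme"
  assumes inverse_monoid: "inverse_monoid S"
begin

abbreviation mul (infixl "\<cdot>" 70) where "a \<cdot> b \<equiv> smul S a b"
abbreviation one ("\<one>") where "\<one> \<equiv> sone S"
abbreviation inv ("_\<^sup>\<dagger>" [1000] 999) where "a\<^sup>\<dagger> \<equiv> sinv S a"
abbreviation idempotent where "idempotent e \<equiv> e \<cdot> e = e"
abbreviation rng where "rng a \<equiv> a \<cdot> a\<^sup>\<dagger>"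
abbreviation below (infix "\<preceq>" 50) where "a \<preceq> b \<equiv> nat_le S a b"
abbreviation sim (infix "\<sim>" 50) where "a \<sim> b \<equiv> sigma S a b"

lemma mul_assoc: "(a \<cdot> b) \<cdot> c = a \<cdot> (b \<cdot> c)"
  using inverse_monoid unfolding inverse_monoid_def by blast

lemma one_mul [simp]: "\<one> \<cdot> a = a"
  using inverse_monoid unfolding inverse_monoid_def by blast

lemma mul_one [simp]: "a \<cdot> \<one> = a"
  using inverse_monoid unfolding inverse_monoid_def by blast

lemma mul_inv_mul: "a \<cdot> (a\<^sup>\<dagger> \<cdot> a) = a"
  using inverse_monoid unfolding inverse_monoid_def by (simp add: mul_assoc)

lemma inv_mul_inv: "a\<^sup>\<dagger> \<cdot> (a \<cdot> a\<^sup>\<dagger>) = a\<^sup>\<dagger>"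
  using inverse_monoid unfolding inverse_monoid_def by (simp add: mul_assoc)

lemma inverse_unique: "a \<cdot> (b \<cdot> a) = a \<Longrightarrow> b \<cdot> (a \<cdot> b) = b \<Longrightarrow> b = a\<^sup>\<dagger>"
  using inverse_monoid unfolding inverse_monoid_def by (simp add: mul_assoc)

lemma mul_inv_mul_left: "a \<cdot> (a\<^sup>\<dagger> \<cdot> (a \<cdot> x)) = a \<cdot> x"
  by (metis mul_assoc mul_inv_mul)

lemma inv_mul_inv_left: "a\<^sup>\<dagger> \<cdot> (a \<cdot> (a\<^sup>\<dagger> \<cdot> x)) = a\<^sup>\<dagger> \<cdot> x"
  by (metis mul_assoc inv_mul_inv)

lemmas mul_inv_simps = mul_assoc mul_inv_mul inv_mul_inv mul_inv_mul_left inv_mul_inv_left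

lemma inv_inv [simp]: "(a\<^sup>\<dagger>)\<^sup>\<dagger> = a"
  using inverse_unique[of "a\<^sup>\<dagger>" a] mul_inv_mul[of a] inv_mul_inv[of a] by simp

lemma idempotent_mul_left: "idempotent e \<Longrightarrow> e \<cdot> (e \<cdot> x) = e \<cdot> x"
  by (metis mul_assoc)

lemma inv_idempotent: "idempotent e \<Longrightarrow> e\<^sup>\<dagger> = e"
  using inverse_unique[of e e] by (simp add: idempotent_mul_left)

lemma idempotent_rng: "idempotent (rng a)"
  by (simp add: mul_assoc mul_inv_mul_left)

text \<open>The inverse of \<open>e \<cdot> f\<close> is the idempotent \<open>f \<cdot> (e \<cdot> f)\<^sup>\<dagger> \<cdot> e\<close>, and an element
  whose inverse is idempotent is itself idempotent.\<close>
lemma idempotent_mul: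
  assumes e: "idempotent e" and f: "idempotent f"
  shows "idempotent (e \<cdot> f)"
proof -
  define b where "b = f \<cdot> ((e \<cdot> f)\<^sup>\<dagger> \<cdot> e)"
  have "(e \<cdot> f) \<cdot> (b \<cdot> (e \<cdot> f)) = e \<cdot> f"
    unfolding b_def using mul_inv_mul[of "e \<cdot> f"] by (simp add: mul_assoc idempotent_mul_left e f)
  moreover have "b \<cdot> ((e \<cdot> f) \<cdot> b) = b"
    unfolding b_def using inv_mul_inv_left[of "e \<cdot> f" e] by (simp add: mul_assoc idempotent_mul_left e f)
  ultimately have b_inv: "b = (e \<cdot> f)\<^sup>\<dagger>"
    by (rule inverse_unique)
  have "idempotent b"
    unfolding b_def using inv_mul_inv_left[of "e \<cdot> f"] by (simp add: mul_assoc idempotent_mul_left e f)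
  then show ?thesis
    using inv_idempotent[of b] b_inv by simp
qed

lemma idempotents_commute:
  assumes e: "idempotent e" and f: "idempotent f"
  shows "e \<cdot> f = f \<cdot> e"
proof -
  have ef: "idempotent (e \<cdot> f)" and fe: "idempotent (f \<cdot> e)"
    using idempotent_mul e f by blast+
  have "(e \<cdot> f) \<cdot> ((f \<cdot> e) \<cdot> (e \<cdot> f)) = e \<cdot> f"
    using ef by (simp add: mul_assoc idempotent_mul_left e f)
  moreover have "(f \<cdot> e) \<cdot> ((e \<cdot> f) \<cdot> (f \<cdot> e)) = f \<cdot> e"
    using fe by (simp add: mul_assoc idempotent_mul_left e f)
  ultimately have "f \<cdot> e = (e \<cdot> f)\<^sup>\<dagger>"
    by (rule inverse_unique)
  then show ?thesis
    using inv_idempotent[OF ef] by simp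
qed

lemma idempotents_commute_left: "idempotent e \<Longrightarrow> idempotent f \<Longrightarrow> e \<cdot> (f \<cdot> x) = f \<cdot> (e \<cdot> x)"
  by (metis mul_assoc idempotents_commute)

lemma idempotent_rng_commute: "idempotent e \<Longrightarrow> e \<cdot> (b \<cdot> b\<^sup>\<dagger>) = b \<cdot> (b\<^sup>\<dagger> \<cdot> e)"
  using idempotents_commute[OF _ idempotent_rng[of b]] by (simp add: mul_assoc)

lemma idempotent_rng_commute_left: "idempotent e \<Longrightarrow> e \<cdot> (b \<cdot> (b\<^sup>\<dagger> \<cdot> x)) = b \<cdot> (b\<^sup>\<dagger> \<cdot> (e \<cdot> x))"
  using idempotents_commute_left[OF _ idempotent_rng[of b]] by (simp add: mul_assoc)

lemma inv_mul: "(a \<cdot> b)\<^sup>\<dagger> = b\<^sup>\<dagger> \<cdot> a\<^sup>\<dagger>"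
proof -
  have c: "a\<^sup>\<dagger> \<cdot> (a \<cdot> (b \<cdot> (b\<^sup>\<dagger> \<cdot> x))) = b \<cdot> (b\<^sup>\<dagger> \<cdot> (a\<^sup>\<dagger> \<cdot> (a \<cdot> x)))" for x
    using idempotent_rng_commute_left[OF idempotent_rng[of "a\<^sup>\<dagger>"], of b] by (simp add: mul_assoc)
  have "(a \<cdot> b) \<cdot> ((b\<^sup>\<dagger> \<cdot> a\<^sup>\<dagger>) \<cdot> (a \<cdot> b)) = a \<cdot> b"
    by (simp add: mul_inv_simps c[symmetric])
  moreover have "(b\<^sup>\<dagger> \<cdot> a\<^sup>\<dagger>) \<cdot> ((a \<cdot> b) \<cdot> (b\<^sup>\<dagger> \<cdot> a\<^sup>\<dagger>)) = b\<^sup>\<dagger> \<cdot> a\<^sup>\<dagger>"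
    by (simp add: mul_inv_simps c)
  ultimately show ?thesis
    by (rule inverse_unique[symmetric])
qed

lemma inv_one [simp]: "\<one>\<^sup>\<dagger> = \<one>"
  using inv_idempotent[of \<one>] by simp

lemma below_iff_rng_mul: "a \<preceq> b \<longleftrightarrow> a = rng a \<cdot> b"
proof
  assume "a \<preceq> b"
  then obtain e where e: "idempotent e" "a = e \<cdot> b"
    unfolding nat_le_def by blast
  have "rng a = e \<cdot> (b \<cdot> (b\<^sup>\<dagger> \<cdot> e))"
    using e by (simp add: inv_mul inv_idempotent mul_assoc)
  also have "\<dots> = e \<cdot> (e \<cdot> rng b)"
    using idempotent_rng_commute[OF e(1), of b] by simp
  also have "\<dots> = e \<cdot> rng b"
    using idempotent_mul_left[OF e(1)] by simp
  finally show "a = rng a \<cdot> b"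
    using e by (simp add: mul_inv_simps)
next
  assume "a = rng a \<cdot> b"
  then show "a \<preceq> b"
    unfolding nat_le_def using idempotent_rng by blast
qed

lemma idempotent_mul_below: "idempotent f \<Longrightarrow> f \<cdot> b \<preceq> b"
  unfolding nat_le_def by blast

lemma mul_idempotent_below: "idempotent f \<Longrightarrow> b \<cdot> f \<preceq> b"
proof -
  assume f: "idempotent f"
  have "idempotent (b \<cdot> (f \<cdot> b\<^sup>\<dagger>))"
    using idempotent_rng_commute_left[OF f, of "b\<^sup>\<dagger>"] by (simp add: mul_inv_simps idempotent_mul_left f)
  moreover have "b \<cdot> f = (b \<cdot> (f \<cdot> b\<^sup>\<dagger>)) \<cdot> b"
    using idempotent_rng_commute[OF f, of "b\<^sup>\<dagger>"] by (simp add: mul_inv_simps)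
  ultimately show ?thesis
    unfolding nat_le_def by blast
qed

lemma below_refl: "a \<preceq> a"
  using below_iff_rng_mul by (simp add: mul_inv_simps)

lemma below_trans: "a \<preceq> b \<Longrightarrow> b \<preceq> c \<Longrightarrow> a \<preceq> c"
  unfolding nat_le_def by (metis mul_assoc idempotent_mul)

lemma below_mul_right: "a \<preceq> b \<Longrightarrow> a \<cdot> c \<preceq> b \<cdot> c"
  unfolding nat_le_def by (metis mul_assoc)

lemma below_mul_left:
  assumes "a \<preceq> b"
  shows "c \<cdot> a \<preceq> c \<cdot> b"
proof -
  obtain e where e: "idempotent e" "a = e \<cdot> b"
    using assms unfolding nat_le_def by blast
  have "idempotent (c \<cdot> (e \<cdot> c\<^sup>\<dagger>))"
    using idempotents_commute_left[OF idempotent_rng[of "c\<^sup>\<dagger>"] e(1)]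
    by (simp add: mul_inv_simps idempotent_mul_left e)
  moreover have "c \<cdot> a = (c \<cdot> (e \<cdot> c\<^sup>\<dagger>)) \<cdot> (c \<cdot> b)"
    using idempotent_rng_commute_left[OF e(1), of "c\<^sup>\<dagger>"] by (simp add: mul_inv_simps e)
  ultimately show ?thesis
    unfolding nat_le_def by blast
qed

lemma below_inv:
  assumes "a \<preceq> b"
  shows "a\<^sup>\<dagger> \<preceq> b\<^sup>\<dagger>"
proof -
  obtain e where e: "idempotent e" "a = e \<cdot> b"
    using assms unfolding nat_le_def by blast
  have "idempotent (b\<^sup>\<dagger> \<cdot> (e \<cdot> b))"
    using idempotents_commute_left[OF idempotent_rng[of b] e(1)]
    by (simp add: mul_inv_simps idempotent_mul_left e)
  moreover have "a\<^sup>\<dagger> = (b\<^sup>\<dagger> \<cdot> (e \<cdot> b)) \<cdot> b\<^sup>\<dagger>"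
    using idempotent_rng_commute_left[OF e(1), of b] idempotent_rng_commute[OF e(1), of b]
    by (simp add: mul_inv_simps e inv_mul inv_idempotent)
  ultimately show ?thesis
    unfolding nat_le_def by blast
qed

lemma idempotent_eq_if_absorb:
  "idempotent a \<Longrightarrow> idempotent b \<Longrightarrow> a \<cdot> b = a \<Longrightarrow> b \<cdot> a = b \<Longrightarrow> a = b"
  by (metis idempotents_commute)

lemma rng_mul_rng_below:
  assumes "a \<preceq> b"
  shows "rng a \<cdot> rng b = rng a"
proof -
  define f where "f = rng a"
  have f: "idempotent f"
    unfolding f_def by (rule idempotent_rng)
  have a: "a = f \<cdot> b"
    using assms below_iff_rng_mul f_def by metis
  have "rng a = f \<cdot> (b \<cdot> (b\<^sup>\<dagger> \<cdot> f))"
    using a by (simp add: mul_assoc inv_mul inv_idempotent[OF f])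
  also have "\<dots> = f \<cdot> (f \<cdot> rng b)"
    using idempotent_rng_commute[OF f, of b] by simp
  also have "\<dots> = f \<cdot> rng b"
    using idempotent_mul_left[OF f] by simp
  finally show ?thesis
    unfolding f_def by simp
qed

lemma below_antisym:
  assumes "a \<preceq> b" "b \<preceq> a"
  shows "a = b"
proof -
  have "rng a = rng b"
    using rng_mul_rng_below[OF assms(1)] rng_mul_rng_below[OF assms(2)]
      idempotent_eq_if_absorb idempotent_rng by metis
  then show ?thesis
    using assms below_iff_rng_mul by (metis mul_assoc mul_inv_mul)
qed

lemma rng_mul_absorb: "rng (x \<cdot> y) \<cdot> rng x = rng (x \<cdot> y)"
  by (simp add: mul_inv_simps inv_mul)

lemma rng_mul_prefix:
  assumes "rng (x \<cdot> p \<cdot> q) = rng x"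
  shows "rng (x \<cdot> p) = rng x"
proof -
  have "rng x \<cdot> rng (x \<cdot> p) = rng x"
    using rng_mul_absorb[of "x \<cdot> p" q] unfolding assms .
  then show ?thesis
    using rng_mul_absorb idempotent_eq_if_absorb idempotent_rng by metis
qed

lemma mul_rng_if_rng_mul_eq:
  assumes "rng (y \<cdot> c) = rng y"
  shows "y \<cdot> rng c = y"
proof -
  have "rng (y \<cdot> rng c) = rng (y \<cdot> c)"
    by (simp add: mul_inv_simps inv_mul)
  then have "y \<cdot> rng c = rng y \<cdot> y"
    using mul_idempotent_below[OF idempotent_rng] below_iff_rng_mul assms by metis
  then show ?thesis
    by (simp add: mul_inv_simps)
qed

lemma mul_inv_mul_eq_if_below:
  assumes "a \<preceq> b"
  shows "b \<cdot> (b\<^sup>\<dagger> \<cdot> a) = a"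
proof -
  have a: "a = rng a \<cdot> b"
    using assms unfolding below_iff_rng_mul .
  have "b \<cdot> (b\<^sup>\<dagger> \<cdot> (rng a \<cdot> b)) = rng a \<cdot> (b \<cdot> (b\<^sup>\<dagger> \<cdot> b))"
    using idempotent_rng_commute_left[OF idempotent_rng[of a], of b b] by (simp add: mul_assoc)
  then show ?thesis
    using a by (simp add: mul_inv_mul)
qed

lemma sigma_refl: "a \<sim> a"
  unfolding sigma_def using below_refl by blast

lemma sigma_sym: "a \<sim> b \<Longrightarrow> b \<sim> a"
  unfolding sigma_def by blast

lemma below_sigma: "a \<preceq> b \<Longrightarrow> a \<sim> b"
  unfolding sigma_def using below_refl by blast

text \<open>\<open>rng y \<cdot> x = rng x \<cdot> y\<close> is a common lower bound of \<open>x\<close> and \<open>y\<close>.\<close>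
lemma sigma_trans:
  assumes "a \<sim> b" "b \<sim> c"
  shows "a \<sim> c"
proof -
  obtain x where x: "x \<preceq> a" "x \<preceq> b"
    using assms(1) unfolding sigma_def by blast
  obtain y where y: "y \<preceq> b" "y \<preceq> c"
    using assms(2) unfolding sigma_def by blast
  have "rng x \<cdot> (rng y \<cdot> b) = rng y \<cdot> (rng x \<cdot> b)"
    by (rule idempotents_commute_left[OF idempotent_rng idempotent_rng])
  then have "rng x \<cdot> (rng y \<cdot> b) = rng y \<cdot> x"
    using x(2) below_iff_rng_mul by simp
  moreover have "rng x \<cdot> (rng y \<cdot> b) = rng x \<cdot> y"
    using y(1) below_iff_rng_mul by simp
  ultimately have "rng y \<cdot> x \<preceq> x" "rng y \<cdot> x \<preceq> y"
    using idempotent_mul_below[OF idempotent_rng] by metis+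
  then show ?thesis
    unfolding sigma_def using x y below_trans by blast
qed

lemma sigma_mul_left: "a \<sim> b \<Longrightarrow> c \<cdot> a \<sim> c \<cdot> b"
  unfolding sigma_def using below_mul_left by blast

lemma sigma_mul_right: "a \<sim> b \<Longrightarrow> a \<cdot> c \<sim> b \<cdot> c"
  unfolding sigma_def using below_mul_right by blast

lemma sigma_inv: "a \<sim> b \<Longrightarrow> a\<^sup>\<dagger> \<sim> b\<^sup>\<dagger>"
  unfolding sigma_def using below_inv by blast


lemma cls_eq_iff: "cls S a = cls S b \<longleftrightarrow> a \<sim> b"
proof
  assume "cls S a = cls S b"
  then show "a \<sim> b"
    using sigma_refl unfolding cls_def by blast
next
  assume "a \<sim> b"
  then show "cls S a = cls S b"
    unfolding cls_def using sigma_sym sigma_trans by blast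
qed

lemma gmul_cls: "gmul S (cls S x) (cls S y) = cls S (x \<cdot> y)"
proof -
  define a where "a = (SOME a. cls S x = cls S a)"
  define b where "b = (SOME b. cls S y = cls S b)"
  have "cls S x = cls S a"
    unfolding a_def by (rule someI[of _ x]) simp
  moreover have "cls S y = cls S b"
    unfolding b_def by (rule someI[of _ y]) simp
  ultimately have "a \<cdot> b \<sim> x \<cdot> y"
    unfolding cls_eq_iff by (meson sigma_mul_left sigma_mul_right sigma_sym sigma_trans)
  then show ?thesis
    unfolding gmul_def a_def[symmetric] b_def[symmetric] cls_eq_iff[symmetric] .
qed

lemma cls_one_eq_cls_idempotent: "idempotent e \<Longrightarrow> cls S \<one> = cls S e"
  using below_sigma[OF idempotent_mul_below, of e \<one>] sigma_sym unfolding cls_eq_iff by simp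

lemma wval_Nil [simp]: "wval S \<iota> [] = \<one>"
  unfolding wval_def by simp

lemma wval_Cons [simp]: "wval S \<iota> (a # u) = lval S \<iota> a \<cdot> wval S \<iota> u"
  unfolding wval_def by simp

lemma wval_append [simp]: "wval S \<iota> (u @ v) = wval S \<iota> u \<cdot> wval S \<iota> v"
  by (induction u) (auto simp: mul_assoc)

lemma gmul_gw: "gmul S (cls S x) (gw S \<iota> u) = cls S (x \<cdot> wval S \<iota> u)"
  unfolding gw_def gmul_cls ..

lemma lval_flip [simp]: "lval S \<iota> (flip a) = (lval S \<iota> a)\<^sup>\<dagger>"
  by (cases a) auto

definition tail_val :: "('x \<Rightarrow> 's) \<Rightarrow> ('x word \<times> 'x word) list \<Rightarrow> 's" where
  "tail_val \<iota> ps = foldr (\<lambda>p r. smax S (wval S \<iota> (fst p)) \<cdot> wval S \<iota> (snd p) \<cdot> r) ps \<one>"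

lemma tail_val_Nil [simp]: "tail_val \<iota> [] = \<one>"
  unfolding tail_val_def by simp

lemma tail_val_Cons [simp]:
  "tail_val \<iota> ((v, u) # ps) = smax S (wval S \<iota> v) \<cdot> (wval S \<iota> u \<cdot> tail_val \<iota> ps)"
  unfolding tail_val_def by (simp add: mul_assoc)

lemma tail_val_append: "tail_val \<iota> (ps @ qs) = tail_val \<iota> ps \<cdot> tail_val \<iota> qs"
  unfolding tail_val_def by (induction ps) (auto simp: mul_assoc)

lemma tval_eq_tail_val: "tval S \<iota> w = wval S \<iota> (fst w) \<cdot> tail_val \<iota> (snd w)"
  unfolding tval_def tail_val_def ..

end

section \<open>F-inverse monoids\<close>

locale F_inv_monoid =
  fixes S :: "('s, 'z) FIM_scheme"
  assumes F_inverse_monoid: "F_inverse_monoid S"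

sublocale F_inv_monoid \<subseteq> inv_monoid
  using F_inverse_monoid by unfold_locales (simp add: F_inverse_monoid_def)

context F_inv_monoid
begin

lemma smax_sigma: "smax S a \<sim> a"
  using F_inverse_monoid unfolding F_inverse_monoid_def by blast

lemma below_smax: "t \<sim> s \<Longrightarrow> t \<preceq> smax S s"
  using F_inverse_monoid unfolding F_inverse_monoid_def by blast

lemma smax_one [simp]: "smax S \<one> = \<one>"
proof -
  obtain f where f: "idempotent f" "\<one> = f \<cdot> smax S \<one>"
    using below_smax[OF sigma_refl] unfolding nat_le_def by blast
  then have "f = \<one>"
    by (metis mul_assoc mul_one)
  then show ?thesis
    using f by simp
qed

lemma smax_inv: "smax S (a\<^sup>\<dagger>) = (smax S a)\<^sup>\<dagger>"
proof -
  have "(smax S a)\<^sup>\<dagger> \<preceq> smax S (a\<^sup>\<dagger>)"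
    using below_smax sigma_inv[OF smax_sigma] by blast
  moreover have "(smax S (a\<^sup>\<dagger>))\<^sup>\<dagger> \<preceq> smax S a"
    using below_smax sigma_inv[OF smax_sigma[of "a\<^sup>\<dagger>"]] by simp
  then have "smax S (a\<^sup>\<dagger>) \<preceq> (smax S a)\<^sup>\<dagger>"
    using below_inv by fastforce
  ultimately show ?thesis
    by (rule below_antisym[rotated])
qed

text \<open>Both lie below the greatest element of their common \<open>\<sigma>\<close>-class.\<close>
lemma eq_if_rng_eq_sigma:
  assumes "rng y = rng z" "y \<sim> z"
  shows "y = z"
proof -
  have "y \<preceq> smax S z" "z \<preceq> smax S z"
    using below_smax assms(2) sigma_refl by auto
  then show ?thesis
    using assms(1) below_iff_rng_mul by metis
qed

lemma rng_mul_smax: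
  assumes "rng y = rng x" "y \<sim> x \<cdot> v"
  shows "rng (x \<cdot> smax S v) = rng x"
proof -
  have "x\<^sup>\<dagger> \<cdot> y \<sim> x\<^sup>\<dagger> \<cdot> (x \<cdot> v)"
    using sigma_mul_left[OF assms(2)] .
  moreover have "x\<^sup>\<dagger> \<cdot> (x \<cdot> v) \<sim> v"
    using below_sigma[OF idempotent_mul_below[OF idempotent_rng[of "x\<^sup>\<dagger>"]]] by (simp add: mul_assoc)
  ultimately have "x \<cdot> (x\<^sup>\<dagger> \<cdot> y) \<preceq> x \<cdot> smax S v"
    using below_smax sigma_trans below_mul_left by blast
  moreover have "x \<cdot> (x\<^sup>\<dagger> \<cdot> y) = y"
    using assms(1) by (metis mul_assoc mul_inv_mul)
  ultimately have "rng x \<cdot> rng (x \<cdot> smax S v) = rng x"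
    using rng_mul_rng_below assms(1) by metis
  then show ?thesis
    using idempotent_eq_if_absorb[OF idempotent_rng idempotent_rng rng_mul_absorb] by simp
qed

lemma cls_mul_smax: "cls S (x \<cdot> smax S v) = cls S (x \<cdot> v)"
  unfolding cls_eq_iff using sigma_mul_left[OF smax_sigma] .

end

section \<open>Terms and journeys\<close>

lemma fst_flip [simp]: "fst (flip a) = fst a"
  by (cases a) auto

lemma word_over_Nil [simp]: "word_over X []"
  by (simp add: word_over_def)

definition winverse :: "'x word \<Rightarrow> 'x word" where
  "winverse u = rev (map flip u)"

lemma word_over_winverse: "word_over X u \<Longrightarrow> word_over X (winverse u)"
  unfolding word_over_def winverse_def by auto

text \<open>The term \<open>a b\<close>; the leading word of \<open>b\<close> becomes the factor \<open>1\<^sup>m (fst b)\<close>.\<close>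
definition tconcat :: "'x fterm \<Rightarrow> 'x fterm \<Rightarrow> 'x fterm" where
  "tconcat a b = (fst a, snd a @ ([], fst b) # snd b)"

lemma term_over_tconcat: "term_over X a \<Longrightarrow> term_over X b \<Longrightarrow> term_over X (tconcat a b)"
  unfolding term_over_def tconcat_def by auto

text \<open>Based on \<open>(v\<^sup>m u)\<^sup>-\<^sup>1 = 1\<^sup>m u\<^sup>-\<^sup>1 (v\<^sup>-\<^sup>1)\<^sup>m 1\<close>, which holds since \<open>(v\<^sup>m)\<^sup>-\<^sup>1 = (v\<^sup>-\<^sup>1)\<^sup>m\<close> and \<open>1\<^sup>m = 1\<close>.\<close>
fun tail_inverse :: "('x word \<times> 'x word) list \<Rightarrow> ('x word \<times> 'x word) list" where
  "tail_inverse [] = []"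
| "tail_inverse ((v, u) # ps) = tail_inverse ps @ [([], winverse u), (winverse v, [])]"

lemma words_over_tail_inverse:
  "\<forall>p \<in> set ps. word_over X (fst p) \<and> word_over X (snd p) \<Longrightarrow>
   \<forall>p \<in> set (tail_inverse ps). word_over X (fst p) \<and> word_over X (snd p)"
  by (induction ps rule: tail_inverse.induct) (auto simp: word_over_winverse)

definition tinverse :: "'x fterm \<Rightarrow> 'x fterm" where
  "tinverse t = ([], tail_inverse (snd t) @ [([], winverse (fst t))])"

lemma term_over_tinverse:
  assumes "term_over X t"
  shows "term_over X (tinverse t)"
proof -
  have "\<forall>p \<in> set (tail_inverse (snd t)). word_over X (fst p) \<and> word_over X (snd p)"
    using assms words_over_tail_inverse unfolding term_over_def by blast
  moreover have "word_over X (winverse (fst t))"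
    using assms word_over_winverse unfolding term_over_def by blast
  ultimately show ?thesis
    unfolding term_over_def tinverse_def by simp
qed

lemma gsub_trans: "gsub A B \<Longrightarrow> gsub B C \<Longrightarrow> gsub A C"
  unfolding gsub_def by blast

lemma gsub_gunion: "gsub (gunion A B) D \<longleftrightarrow> gsub A D \<and> gsub B D"
  unfolding gsub_def gunion_def by auto

lemma cS_closure_subgraph: "cS_closed S X \<iota> E \<Longrightarrow> gsub D E \<Longrightarrow> gsub (cS_closure S X \<iota> D) E"
  unfolding cS_closure_def gsub_def fst_conv snd_conv by (blast intro: Inter_lower)+

lemma gsub_cS_closureI:
  "(\<And>E. cS_closed S X \<iota> E \<Longrightarrow> gsub D E \<Longrightarrow> gsub A E) \<Longrightarrow> gsub A (cS_closure S X \<iota> D)"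
  unfolding gsub_def cS_closure_def fst_conv snd_conv by blast

lemma gsub_gunion_mono: "gsub B C \<Longrightarrow> gsub (gunion A B) (gunion A C)"
  unfolding gsub_def gunion_def by auto

lemma journey_rest_append: "gsub (journey_rest S \<iota> h ps) (journey_rest S \<iota> h (ps @ qs))"
proof (induction ps arbitrary: h)
  case Nil
  then show ?case by (simp add: gsub_def)
next
  case (Cons p ps)
  obtain v u where "p = (v, u)"
    by (cases p)
  then show ?case
    using gsub_gunion_mono[OF Cons.IH] by (simp add: Let_def)
qed

lemma journey_span_tconcat: "gsub (journey_span S \<iota> g a) (journey_span S \<iota> g (tconcat a b))"
  unfolding journey_span_def tconcat_def fst_conv snd_conv
  by (rule gsub_gunion_mono[OF journey_rest_append])

context F_inv_monoid
begin

lemma wval_winverse: "wval S \<iota> (winverse u) = (wval S \<iota> u)\<^sup>\<dagger>"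
  unfolding winverse_def by (induction u) (auto simp: inv_mul)

lemma tval_tconcat: "tval S \<iota> (tconcat a b) = tval S \<iota> a \<cdot> tval S \<iota> b"
  unfolding tval_eq_tail_val tconcat_def by (simp add: tail_val_append mul_assoc)

lemma tail_val_tail_inverse: "tail_val \<iota> (tail_inverse ps) = (tail_val \<iota> ps)\<^sup>\<dagger>"
  by (induction ps rule: tail_inverse.induct)
    (simp_all add: tail_val_append wval_winverse smax_inv inv_mul mul_assoc)

lemma tval_tinverse: "tval S \<iota> (tinverse t) = (tval S \<iota> t)\<^sup>\<dagger>"
  unfolding tval_eq_tail_val tinverse_def
  by (simp add: tail_val_append tail_val_tail_inverse wval_winverse inv_mul)

section \<open>The graph of an \<open>\<R>\<close>-class\<close>

text \<open>Each of its vertices has exactly one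
  representative \<open>y\<close> with \<open>rng y = e\<close> (lemma \<open>eq_if_rng_eq_sigma\<close>).\<close>
definition Rclass_graph :: "'x set \<Rightarrow> ('x \<Rightarrow> 's) \<Rightarrow> 's \<Rightarrow> ('s, 'x) graph" where
  "Rclass_graph X \<iota> e =
     ({cls S y | y. rng y = e},
      {(cls S y, a, cls S (y \<cdot> lval S \<iota> a)) | y a. rng y = e \<and> rng (y \<cdot> lval S \<iota> a) = e \<and> fst a \<in> X})"

lemma Rclass_graph_vertexI: "rng y = e \<Longrightarrow> cls S y \<in> fst (Rclass_graph X \<iota> e)"
  unfolding Rclass_graph_def fst_conv by blast

lemma Rclass_graph_edgeI:
  "rng y = e \<Longrightarrow> rng (y \<cdot> lval S \<iota> a) = e \<Longrightarrow> fst a \<in> X \<Longrightarrow>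
   (cls S y, a, cls S (y \<cdot> lval S \<iota> a)) \<in> snd (Rclass_graph X \<iota> e)"
  unfolding Rclass_graph_def snd_conv by blast

lemma Rclass_graph_flip_edge:
  assumes "rng y = e" "rng (y \<cdot> lval S \<iota> a) = e" "fst a \<in> X"
  shows "(cls S (y \<cdot> lval S \<iota> a), flip a, cls S y) \<in> snd (Rclass_graph X \<iota> e)"
proof -
  have "y \<cdot> rng (lval S \<iota> a) = y"
    using mul_rng_if_rng_mul_eq assms(1,2) by simp
  then have cancel: "y \<cdot> lval S \<iota> a \<cdot> lval S \<iota> (flip a) = y"
    by (simp add: mul_assoc)
  have "(cls S (y \<cdot> lval S \<iota> a), flip a, cls S (y \<cdot> lval S \<iota> a \<cdot> lval S \<iota> (flip a)))
      \<in> snd (Rclass_graph X \<iota> e)"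
    using Rclass_graph_edgeI[of "y \<cdot> lval S \<iota> a" e \<iota> "flip a" X] assms cancel by simp
  then show ?thesis
    unfolding cancel .
qed

lemma Rclass_graph_is_subgraph: "is_subgraph S X \<iota> (Rclass_graph X \<iota> e)"
  unfolding is_subgraph_def
proof (intro conjI)
  show "fst (Rclass_graph X \<iota> e) \<subseteq> grp S"
    unfolding Rclass_graph_def grp_def by auto
  show "snd (Rclass_graph X \<iota> e) \<subseteq> cayley_edges S X \<iota>"
  proof
    fix z
    assume "z \<in> snd (Rclass_graph X \<iota> e)"
    then obtain y a where "z = (cls S y, a, gmul S (cls S y) (cls S (lval S \<iota> a)))" "fst a \<in> X"
      unfolding Rclass_graph_def snd_conv gmul_cls by blast
    then show "z \<in> cayley_edges S X \<iota>"
      unfolding cayley_edges_def grp_def by blast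
  qed
  show "\<forall>(g, a, h) \<in> snd (Rclass_graph X \<iota> e).
      g \<in> fst (Rclass_graph X \<iota> e) \<and> h \<in> fst (Rclass_graph X \<iota> e) \<and> (h, flip a, g) \<in> snd (Rclass_graph X \<iota> e)"
  proof clarify
    fix g a h
    assume "(g, a, h) \<in> snd (Rclass_graph X \<iota> e)"
    then obtain y where y: "g = cls S y" "h = cls S (y \<cdot> lval S \<iota> a)" "rng y = e"
      "rng (y \<cdot> lval S \<iota> a) = e" "fst a \<in> X"
      unfolding Rclass_graph_def snd_conv by blast
    show "g \<in> fst (Rclass_graph X \<iota> e) \<and> h \<in> fst (Rclass_graph X \<iota> e) \<and> (h, flip a, g) \<in> snd (Rclass_graph X \<iota> e)"
      unfolding y(1,2)
      using Rclass_graph_vertexI[OF y(3)] Rclass_graph_vertexI[OF y(4)] Rclass_graph_flip_edge[OF y(3-5)]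
      by blast
  qed
qed

lemma path_span_vertex: "p @ q = u \<Longrightarrow> cls S (x \<cdot> wval S \<iota> p) \<in> fst (path_span S \<iota> (cls S x) u)"
  unfolding path_span_def gmul_gw by auto

lemma path_span_edge:
  "p @ a # q = u \<Longrightarrow>
   (cls S (x \<cdot> wval S \<iota> p), a, cls S (x \<cdot> wval S \<iota> p \<cdot> lval S \<iota> a)) \<in> snd (path_span S \<iota> (cls S x) u)"
proof -
  assume "p @ a # q = u"
  then have "(gmul S (cls S x) (gw S \<iota> p), a, gmul S (cls S x) (gw S \<iota> (p @ [a])))
      \<in> snd (path_span S \<iota> (cls S x) u)"
    unfolding path_span_def snd_conv by blast
  then show ?thesis
    unfolding gmul_gw by (simp add: mul_assoc)
qed

lemma path_span_subgraph_Rclass_graph: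
  assumes x: "rng x = e" and u: "word_over X u" and xu: "rng (x \<cdot> wval S \<iota> u) = e"
  shows "gsub (path_span S \<iota> (cls S x) u) (Rclass_graph X \<iota> e)"
proof -
  have prefix: "rng (x \<cdot> wval S \<iota> p) = e" if "p @ q = u" for p q
    using xu x rng_mul_prefix[of x "wval S \<iota> p" "wval S \<iota> q"] that by (auto simp: mul_assoc)
  have edges: "(cls S (x \<cdot> wval S \<iota> p), a, cls S (x \<cdot> wval S \<iota> p \<cdot> lval S \<iota> a)) \<in> snd (Rclass_graph X \<iota> e)
    \<and> (cls S (x \<cdot> wval S \<iota> p \<cdot> lval S \<iota> a), flip a, cls S (x \<cdot> wval S \<iota> p)) \<in> snd (Rclass_graph X \<iota> e)"
    if "p @ a # q = u" for p a q
  proof -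
    have 1: "rng (x \<cdot> wval S \<iota> p) = e"
      using prefix[of p "a # q"] that by simp
    have 2: "rng (x \<cdot> wval S \<iota> p \<cdot> lval S \<iota> a) = e"
      using prefix[of "p @ [a]" q] that by (simp add: mul_assoc)
    have 3: "fst a \<in> X"
      using u that unfolding word_over_def by auto
    show ?thesis
      using Rclass_graph_edgeI[OF 1 2 3] Rclass_graph_flip_edge[OF 1 2 3] by blast
  qed
  have "fst (path_span S \<iota> (cls S x) u) \<subseteq> fst (Rclass_graph X \<iota> e)"
    unfolding path_span_def Rclass_graph_def gmul_gw using prefix by auto
  moreover have "snd (path_span S \<iota> (cls S x) u) \<subseteq> snd (Rclass_graph X \<iota> e)"
  proof
    fix z
    assume "z \<in> snd (path_span S \<iota> (cls S x) u)"
    then obtain p a q where "p @ a # q = u" and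
      "z = (gmul S (cls S x) (gw S \<iota> p), a, gmul S (cls S x) (gw S \<iota> (p @ [a]))) \<or>
       z = (gmul S (cls S x) (gw S \<iota> (p @ [a])), flip a, gmul S (cls S x) (gw S \<iota> p))"
      unfolding path_span_def snd_conv by blast
    then show "z \<in> snd (Rclass_graph X \<iota> e)"
      using edges[of p a q] unfolding gmul_gw by (auto simp: mul_assoc)
  qed
  ultimately show ?thesis
    unfolding gsub_def by simp
qed

text \<open>Along a path inside the graph, uniqueness of representatives lets one follow the
  representatives letter by letter.\<close>
lemma rng_mul_wval_if_path_span_subgraph:
  assumes x: "rng x = e" and sub: "gsub (path_span S \<iota> (cls S x) u) (Rclass_graph X \<iota> e)"
  shows "rng (x \<cdot> wval S \<iota> u) = e"
proof -
  have "p @ q = u \<longrightarrow> rng (x \<cdot> wval S \<iota> p) = e" for p q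
  proof (induction p arbitrary: q rule: rev_induct)
    case Nil
    show ?case using x by simp
  next
    case (snoc a p)
    show ?case
    proof
      assume pq: "(p @ [a]) @ q = u"
      then have IH: "rng (x \<cdot> wval S \<iota> p) = e"
        using snoc.IH[of "a # q"] by simp
      have "(cls S (x \<cdot> wval S \<iota> p), a, cls S (x \<cdot> wval S \<iota> p \<cdot> lval S \<iota> a)) \<in> snd (Rclass_graph X \<iota> e)"
        using path_span_edge[of p a q u x] pq sub unfolding gsub_def by auto
      then obtain y where y: "cls S y = cls S (x \<cdot> wval S \<iota> p)" "rng y = e" "rng (y \<cdot> lval S \<iota> a) = e"
        unfolding Rclass_graph_def by auto
      have "y = x \<cdot> wval S \<iota> p"
        using eq_if_rng_eq_sigma[of y "x \<cdot> wval S \<iota> p"] y(1,2) IH unfolding cls_eq_iff by simp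
      then show "rng (x \<cdot> wval S \<iota> (p @ [a])) = e"
        using y by (simp add: mul_assoc)
    qed
  qed
  from this[of u "[]"] show ?thesis
    by simp
qed

lemma rng_mul_smax_if_Rclass_graph_vertex:
  assumes "rng x = e" and "cls S (x \<cdot> smax S v) \<in> fst (Rclass_graph X \<iota> e)"
  shows "rng (x \<cdot> smax S v) = e"
proof -
  obtain y where "cls S y = cls S (x \<cdot> v)" "rng y = e"
    using assms(2) unfolding Rclass_graph_def cls_mul_smax by auto
  then show ?thesis
    using rng_mul_smax[of y x v] assms(1) cls_eq_iff by simp
qed

lemma journey_rest_Cons_cls:
  "journey_rest S \<iota> (cls S x) ((v, u) # ps) =
     gunion (path_span S \<iota> (cls S (x \<cdot> smax S (wval S \<iota> v))) u)
       (journey_rest S \<iota> (cls S (x \<cdot> smax S (wval S \<iota> v) \<cdot> wval S \<iota> u)) ps)"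
proof -
  have "gmul S (cls S x) (gw S \<iota> v) = cls S (x \<cdot> smax S (wval S \<iota> v))"
    by (simp only: gmul_gw cls_mul_smax)
  then show ?thesis
    by (simp only: journey_rest.simps Let_def gmul_gw)
qed

lemma journey_span_cls:
  "journey_span S \<iota> (cls S x) t =
     gunion (path_span S \<iota> (cls S x) (fst t)) (journey_rest S \<iota> (cls S (x \<cdot> wval S \<iota> (fst t))) (snd t))"
  unfolding journey_span_def gmul_gw ..

lemma journey_rest_subgraph_Rclass_graph_iff:
  assumes "rng x = e" and "\<forall>p \<in> set ps. word_over X (snd p)"
  shows "gsub (journey_rest S \<iota> (cls S x) ps) (Rclass_graph X \<iota> e) \<longleftrightarrow> rng (x \<cdot> tail_val \<iota> ps) = e"
  using assms
proof (induction ps arbitrary: x)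
  case Nil
  then show ?case by (simp add: gsub_def)
next
  case (Cons p ps)
  obtain v u where p: "p = (v, u)"
    by (cases p)
  define x' where "x' = x \<cdot> smax S (wval S \<iota> v)"
  have u: "word_over X u" and ps: "\<forall>p \<in> set ps. word_over X (snd p)"
    using Cons.prems p by auto
  have journey: "journey_rest S \<iota> (cls S x) (p # ps) =
      gunion (path_span S \<iota> (cls S x') u) (journey_rest S \<iota> (cls S (x' \<cdot> wval S \<iota> u)) ps)"
    unfolding p x'_def journey_rest_Cons_cls ..
  have val: "x \<cdot> tail_val \<iota> (p # ps) = x' \<cdot> wval S \<iota> u \<cdot> tail_val \<iota> ps"
    unfolding x'_def p by (simp add: mul_assoc)
  show ?case
  proof
    assume sub: "gsub (journey_rest S \<iota> (cls S x) (p # ps)) (Rclass_graph X \<iota> e)"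
    then have path: "gsub (path_span S \<iota> (cls S x') u) (Rclass_graph X \<iota> e)"
      and rest: "gsub (journey_rest S \<iota> (cls S (x' \<cdot> wval S \<iota> u)) ps) (Rclass_graph X \<iota> e)"
      unfolding journey gsub_gunion by auto
    have "cls S x' \<in> fst (Rclass_graph X \<iota> e)"
      using path_span_vertex[of "[]" u u x'] path unfolding gsub_def by auto
    then have "rng x' = e"
      unfolding x'_def using rng_mul_smax_if_Rclass_graph_vertex Cons.prems(1) by blast
    then have "rng (x' \<cdot> wval S \<iota> u) = e"
      using rng_mul_wval_if_path_span_subgraph path by blast
    then show "rng (x \<cdot> tail_val \<iota> (p # ps)) = e"
      unfolding val using Cons.IH ps rest by blast
  next
    assume "rng (x \<cdot> tail_val \<iota> (p # ps)) = e"
    then have all: "rng (x' \<cdot> (wval S \<iota> u \<cdot> tail_val \<iota> ps)) = e"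
      using val by (simp add: mul_assoc)
    then have x': "rng x' = e"
      using rng_mul_prefix[of x "smax S (wval S \<iota> v)" "wval S \<iota> u \<cdot> tail_val \<iota> ps"] Cons.prems(1)
      unfolding x'_def by simp
    then have x'u: "rng (x' \<cdot> wval S \<iota> u) = e"
      using all rng_mul_prefix[of x' "wval S \<iota> u" "tail_val \<iota> ps"] by (simp add: mul_assoc)
    show "gsub (journey_rest S \<iota> (cls S x) (p # ps)) (Rclass_graph X \<iota> e)"
      unfolding journey gsub_gunion
      using path_span_subgraph_Rclass_graph[OF x' u x'u] Cons.IH[OF x'u ps] all
      by (simp add: mul_assoc)
  qed
qed

lemma journey_span_subgraph_Rclass_graph_iff:
  assumes x: "rng x = e" and t: "term_over X t"
  shows "gsub (journey_span S \<iota> (cls S x) t) (Rclass_graph X \<iota> e) \<longleftrightarrow> rng (x \<cdot> tval S \<iota> t) = e"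
proof -
  have t0: "word_over X (fst t)" and ps: "\<forall>p \<in> set (snd t). word_over X (snd p)"
    using t unfolding term_over_def by auto
  show ?thesis
  proof
    assume "gsub (journey_span S \<iota> (cls S x) t) (Rclass_graph X \<iota> e)"
    then have path: "gsub (path_span S \<iota> (cls S x) (fst t)) (Rclass_graph X \<iota> e)"
      and rest: "gsub (journey_rest S \<iota> (cls S (x \<cdot> wval S \<iota> (fst t))) (snd t)) (Rclass_graph X \<iota> e)"
      unfolding journey_span_cls gsub_gunion by auto
    have "rng (x \<cdot> wval S \<iota> (fst t)) = e"
      using rng_mul_wval_if_path_span_subgraph[OF x path] .
    then show "rng (x \<cdot> tval S \<iota> t) = e"
      using journey_rest_subgraph_Rclass_graph_iff[OF _ ps] rest unfolding tval_eq_tail_val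
      by (simp add: mul_assoc)
  next
    assume all: "rng (x \<cdot> tval S \<iota> t) = e"
    then have x0: "rng (x \<cdot> wval S \<iota> (fst t)) = e"
      using rng_mul_prefix[of x "wval S \<iota> (fst t)" "tail_val \<iota> (snd t)"] x unfolding tval_eq_tail_val
      by (simp add: mul_assoc)
    show "gsub (journey_span S \<iota> (cls S x) t) (Rclass_graph X \<iota> e)"
      unfolding journey_span_cls gsub_gunion
      using path_span_subgraph_Rclass_graph[OF x t0 x0] journey_rest_subgraph_Rclass_graph_iff[OF x0 ps] all
      unfolding tval_eq_tail_val by (simp add: mul_assoc)
  qed
qed

lemma Rclass_graph_cS_closed: "cS_closed S X \<iota> (Rclass_graph X \<iota> e)"
  unfolding cS_closed_def
proof (intro conjI Rclass_graph_is_subgraph allI impI ballI)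
  fix u v g h
  assume u: "term_over X u" and v: "term_over X v" and uv: "tval S \<iota> u = tval S \<iota> v"
    and g: "g \<in> fst (Rclass_graph X \<iota> e)"
  obtain y where "g = cls S y" "rng y = e"
    using g unfolding Rclass_graph_def by auto
  then show "labels_journey S \<iota> (Rclass_graph X \<iota> e) g h u \<longleftrightarrow> labels_journey S \<iota> (Rclass_graph X \<iota> e) g h v"
    unfolding labels_journey_def
    using journey_span_subgraph_Rclass_graph_iff[of y e X u \<iota>] journey_span_subgraph_Rclass_graph_iff[of y e X v \<iota>] u v uv
    by simp
qed

lemma journey_rest_end_vertex:
  "cls S (x \<cdot> tail_val \<iota> ps) \<in> fst (journey_rest S \<iota> (cls S x) ps) \<or> cls S (x \<cdot> tail_val \<iota> ps) = cls S x"
proof (induction ps arbitrary: x)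
  case Nil
  then show ?case by simp
next
  case (Cons p ps)
  obtain v u where p: "p = (v, u)"
    by (cases p)
  define x' where "x' = x \<cdot> smax S (wval S \<iota> v)"
  have "cls S (x' \<cdot> wval S \<iota> u) \<in> fst (path_span S \<iota> (cls S x') u)"
    using path_span_vertex[of u "[]" u x'] by simp
  moreover have "x \<cdot> tail_val \<iota> (p # ps) = x' \<cdot> wval S \<iota> u \<cdot> tail_val \<iota> ps"
    unfolding x'_def p by (simp add: mul_assoc)
  ultimately have "cls S (x \<cdot> tail_val \<iota> (p # ps)) \<in> fst (journey_rest S \<iota> (cls S x) (p # ps))"
    using Cons.IH[of "x' \<cdot> wval S \<iota> u"]
    unfolding p journey_rest_Cons_cls x'_def[symmetric] gunion_def fst_conv by auto
  then show ?case ..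
qed

lemma journey_span_start_vertex: "cls S x \<in> fst (journey_span S \<iota> (cls S x) t)"
  using path_span_vertex[of "[]" "fst t" "fst t" x \<iota>] unfolding journey_span_cls gunion_def by simp

lemma journey_span_end_vertex: "cls S (x \<cdot> tval S \<iota> t) \<in> fst (journey_span S \<iota> (cls S x) t)"
  using journey_rest_end_vertex[of "x \<cdot> wval S \<iota> (fst t)" \<iota> "snd t"] path_span_vertex[of "fst t" "[]" "fst t" x]
  unfolding journey_span_cls tval_eq_tail_val by (auto simp: gunion_def mul_assoc)

section \<open>F-Schuetzenberger graphs\<close>

lemma FSchutz_subgraph_Rclass_graph:
  assumes "term_over X w"
  shows "gsub (FSchutz S X \<iota> w) (Rclass_graph X \<iota> (rng (tval S \<iota> w)))"
proof -
  define W where "W = tval S \<iota> w"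
  have "cls S \<one> = cls S (rng W)"
    using cls_one_eq_cls_idempotent[OF idempotent_rng] .
  moreover have "gsub (journey_span S \<iota> (cls S (rng W)) w) (Rclass_graph X \<iota> (rng W))"
    using journey_span_subgraph_Rclass_graph_iff[of "rng W" "rng W" X w \<iota>] assms
    unfolding W_def by (simp add: mul_inv_simps inv_mul)
  ultimately show ?thesis
    unfolding FSchutz_def W_def by (simp add: cS_closure_subgraph Rclass_graph_cS_closed)
qed

lemma below_if_labels_journey_FSchutz:
  assumes w: "term_over X w" and u: "term_over X u"
    and journey: "labels_journey S \<iota> (FSchutz S X \<iota> w) (cls S \<one>) (cls S (tval S \<iota> w)) u"
  shows "tval S \<iota> w \<preceq> tval S \<iota> u"
proof -
  define W U where "W = tval S \<iota> w" and "U = tval S \<iota> u"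
  define e where "e = rng W"
  have e: "idempotent e" "rng e = e"
    unfolding e_def using idempotent_rng inv_idempotent by simp_all
  have "cls S \<one> = cls S e"
    using cls_one_eq_cls_idempotent[OF e(1)] .
  then have "gsub (journey_span S \<iota> (cls S e) u) (Rclass_graph X \<iota> e)"
    using journey FSchutz_subgraph_Rclass_graph[OF w] gsub_trans
    unfolding labels_journey_def e_def W_def by metis
  then have "rng (e \<cdot> U) = rng W"
    using journey_span_subgraph_Rclass_graph_iff[OF e(2) u] unfolding U_def e_def by simp
  moreover have "e \<cdot> U \<sim> W"
  proof -
    have "U \<sim> W"
      using journey unfolding labels_journey_def gmul_cls cls_eq_iff U_def W_def by simp
    then show ?thesis
      using sigma_trans[OF below_sigma[OF idempotent_mul_below[OF e(1)]]] by blast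
  qed
  ultimately have "e \<cdot> U = W"
    by (rule eq_if_rng_eq_sigma)
  then show ?thesis
    unfolding nat_le_def W_def U_def using e(1) by metis
qed

lemma labels_journey_FSchutz_if_below:
  assumes w: "term_over X w" and u: "term_over X u" and below: "tval S \<iota> w \<preceq> tval S \<iota> u"
  shows "labels_journey S \<iota> (FSchutz S X \<iota> w) (cls S \<one>) (cls S (tval S \<iota> w)) u"
proof -
  define v where "v = tconcat u (tconcat (tinverse u) w)"
  have v: "term_over X v"
    unfolding v_def using term_over_tconcat term_over_tinverse u w by blast
  have "tval S \<iota> v = tval S \<iota> w"
    unfolding v_def tval_tconcat tval_tinverse using mul_inv_mul_eq_if_below[OF below] .
  have "gsub (journey_span S \<iota> (cls S \<one>) u) (FSchutz S X \<iota> w)"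
    unfolding FSchutz_def
  proof (rule gsub_cS_closureI)
    fix E
    assume closed: "cS_closed S X \<iota> E" and sub: "gsub (journey_span S \<iota> (cls S \<one>) w) E"
    have "cls S \<one> \<in> fst E" "cls S (tval S \<iota> w) \<in> fst E"
      using journey_span_start_vertex[of \<one> \<iota> w] journey_span_end_vertex[of \<one> \<iota> w] sub
      unfolding gsub_def by auto
    moreover have "labels_journey S \<iota> E (cls S \<one>) (cls S (tval S \<iota> w)) w"
      unfolding labels_journey_def gmul_cls using sub by simp
    ultimately have "labels_journey S \<iota> E (cls S \<one>) (cls S (tval S \<iota> w)) v"
      using closed w v \<open>tval S \<iota> v = tval S \<iota> w\<close> unfolding cS_closed_def by metis
    then show "gsub (journey_span S \<iota> (cls S \<one>) u) E"
      using journey_span_tconcat gsub_trans unfolding labels_journey_def v_def by blast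
  qed
  moreover have "gmul S (cls S \<one>) (cls S (tval S \<iota> u)) = cls S (tval S \<iota> w)"
    unfolding gmul_cls cls_eq_iff using below_sigma[OF below] sigma_sym by simp
  ultimately show ?thesis
    unfolding labels_journey_def by simp
qed

end

theorem mainTheorem4:
  fixes S :: "'s FIM" and X :: "'x set" and \<iota> :: "'x \<Rightarrow> 's"
    and w u :: "'x fterm"
  assumes "F_inverse_monoid S"
    and "X_generated S X \<iota>"
    and "term_over X w"
    and "term_over X u"
  shows "labels_journey S \<iota> (FSchutz S X \<iota> w) (cls S (sone S)) (cls S (tval S \<iota> w)) u
         \<longleftrightarrow> nat_le S (tval S \<iota> w) (tval S \<iota> u)"
proof -
  interpret F_inv_monoid S
    using assms(1) by unfold_locales
  show ?thesis
    using below_if_labels_journey_FSchutz labels_journey_FSchutz_if_below assms(3,4) by blast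
qed

end
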